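(* Let $d,n\ge 2$, $0<\varepsilon<1/4$, and let $f$ be a stable update function. There exists $K>0$ such that for every configuration $\mathcal U^{(0)}$ of $n$ opinions in $\mathbb S^{d-1}$ that is $\varepsilon$-active, there exists a sequence of at most $K$ interventions after which the resulting configuration is $\varepsilon$-inactive.
   Context: Opinions are unit vectors in $\mathbb R^d$; a configuration is an $n$-tuple $(\vec u_1,\dots,\vec u_n)$ and $A_{ij}=\langle\vec u_i,\vec u_j\rangle$. An intervention $(i,j)$, $i\ne j$, replaces $\vec u_i$ by $\vec w/\|\vec w\|$ with $\vec w=\vec u_i+f(A_{ij})\vec u_j$, leaving others unchanged. $f:[-1,1]\to\mathbb R$ is stable if continuous and $\operatorname{sign}f(A)=\operatorname{sign}A$ for all $A$. For $0\le\varepsilon<1$, a configuration is $\varepsilon$-active if there exist $i,j$ with $\varepsilon<|A_{ij}|<1-\varepsilon$, and $\varepsilon$-inactive otherwise. *)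

theory Defs
  imports "HOL-Analysis.Analysis"
begin

text \<open>Opinions are unit vectors in R^d, modelled as real^'d; agents are indexed
  by a finite type 'n (so n = CARD('n)). A configuration is a map 'n => real^'d.\<close>

definition is_config :: "('n \<Rightarrow> real ^ 'd::finite) \<Rightarrow> bool" where
  "is_config U \<longleftrightarrow> (\<forall>i. norm (U i) = 1)"

definition stable :: "(real \<Rightarrow> real) \<Rightarrow> bool" where
  "stable f \<longleftrightarrow> continuous_on {-1..1} f \<and> (\<forall>A\<in>{-1..1}. sgn (f A) = sgn A)"

definition intervene :: "(real \<Rightarrow> real) \<Rightarrow> 'n \<times> 'n \<Rightarrow> ('n \<Rightarrow> real ^ 'd::finite) \<Rightarrow> ('n \<Rightarrow> real ^ 'd::finite)" where
  "intervene f p U =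
     (let i = fst p; j = snd p; w = U i + f (U i \<bullet> U j) *\<^sub>R U j
      in U(i := (1 / norm w) *\<^sub>R w))"

definition apply_interventions ::
  "(real \<Rightarrow> real) \<Rightarrow> ('n \<times> 'n) list \<Rightarrow> ('n \<Rightarrow> real ^ 'd::finite) \<Rightarrow> ('n \<Rightarrow> real ^ 'd::finite)" where
  "apply_interventions f ps U = foldl (\<lambda>V p. intervene f p V) U ps"

definition eps_active :: "real \<Rightarrow> ('n \<Rightarrow> real ^ 'd::finite) \<Rightarrow> bool" where
  "eps_active \<epsilon> U \<longleftrightarrow> (\<exists>i j. \<epsilon> < \<bar>U i \<bullet> U j\<bar> \<and> \<bar>U i \<bullet> U j\<bar> < 1 - \<epsilon>)"

end

theory Submission
  imports Defs
begin

(* Stability gives A f(A) >= 0, so an intervention (i, j) never decreases <u_i, u_j>^2, and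
   by compactness it increases it by a uniform amount as long as eta <= |<u_i, u_j>| <= 1 - delta;
   a bounded number of repetitions of (i, j) thus makes u_i nearly +-u_j. One intervention
   multiplies every |<u_i, x>| by at most 1 + max |f|.
   Induct on the number of agents: choose an anchor b, pull every agent r with
   |<u_r, u_b>| >= eta close to +-u_b, and treat the remaining agents by induction. If eta is
   small enough, the later interventions keep their inner products with u_b below eps/2, so
   every pair ends up nearly parallel or nearly orthogonal. The resulting bound depends only on
   n, eps and f. *)

lemma abs_inner_unit_le_1:
  fixes u v :: "'a::real_inner"
  assumes "norm u = 1" "norm v = 1"
  shows "\<bar>u \<bullet> v\<bar> \<le> 1"
  using Cauchy_Schwarz_ineq2[of u v] assms by simp

lemma norm_add_scaleR_unit_sq:
  fixes u v :: "'a::real_inner"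
  assumes "norm u = 1" "norm v = 1"
  shows "(norm (u + F *\<^sub>R v))\<^sup>2 = 1 + 2 * (u \<bullet> v) * F + F\<^sup>2"
proof -
  have "(norm (u + F *\<^sub>R v))\<^sup>2 = u \<bullet> u + 2 * F * (u \<bullet> v) + F\<^sup>2 * (v \<bullet> v)"
    unfolding power2_norm_eq_inner by (simp add: inner_add_left inner_add_right inner_commute
        algebra_simps power2_eq_square)
  then show ?thesis
    using assms by (simp add: norm_eq_1 algebra_simps)
qed

lemma unit_near_signed_unit:
  fixes u a :: "'a::real_inner"
  assumes "norm u = 1" "norm a = 1" "0 \<le> e" "1 - e\<^sup>2 / 2 \<le> \<bar>u \<bullet> a\<bar>"
  shows "\<exists>s. \<bar>s\<bar> = 1 \<and> norm (u - s *\<^sub>R a) \<le> e"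
proof -
  define s :: real where "s = (if 0 \<le> u \<bullet> a then 1 else -1)"
  have "(norm (u - s *\<^sub>R a))\<^sup>2 = u \<bullet> u - 2 * (s * (u \<bullet> a)) + s\<^sup>2 * (a \<bullet> a)"
    unfolding power2_norm_eq_inner by (simp add: inner_diff_left inner_diff_right inner_commute
        algebra_simps power2_eq_square)
  also have "\<dots> \<le> 2 - 2 * \<bar>u \<bullet> a\<bar>"
    using assms(1,2) by (simp add: norm_eq_1 s_def)
  also have "\<dots> \<le> e\<^sup>2"
    using assms(4) by linarith
  finally have "norm (u - s *\<^sub>R a) \<le> e"
    using assms(3) by (rule power2_le_imp_le)
  moreover have "\<bar>s\<bar> = 1"
    by (simp add: s_def)
  ultimately show ?thesis by blast
qed

lemma abs_inner_le_near_signed_unit: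
  fixes u a v :: "'a::real_inner"
  assumes "norm u = 1" "norm a = 1" "norm v = 1" "0 \<le> e" "1 - e\<^sup>2 / 2 \<le> \<bar>u \<bullet> a\<bar>"
  shows "\<bar>v \<bullet> u\<bar> \<le> \<bar>v \<bullet> a\<bar> + e"
proof -
  obtain s where s: "\<bar>s\<bar> = 1" "norm (u - s *\<^sub>R a) \<le> e"
    using unit_near_signed_unit[OF assms(1,2,4,5)] by blast
  have "\<bar>v \<bullet> u\<bar> = \<bar>s * (v \<bullet> a) + v \<bullet> (u - s *\<^sub>R a)\<bar>"
    by (simp add: inner_diff_right)
  also have "\<dots> \<le> \<bar>v \<bullet> a\<bar> + norm v * norm (u - s *\<^sub>R a)"
    using s(1) Cauchy_Schwarz_ineq2[of v "u - s *\<^sub>R a"]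
      abs_triangle_ineq[of "s * (v \<bullet> a)" "v \<bullet> (u - s *\<^sub>R a)"] by (simp add: abs_mult)
  finally show ?thesis
    using s(2) assms(3) by simp
qed

lemma abs_inner_ge_near_common_unit:
  fixes u a v :: "'a::real_inner"
  assumes "norm u = 1" "norm a = 1" "norm v = 1" "0 \<le> e"
    and "1 - e\<^sup>2 / 2 \<le> \<bar>u \<bullet> a\<bar>" "1 - e\<^sup>2 / 2 \<le> \<bar>v \<bullet> a\<bar>"
  shows "1 - 2 * e\<^sup>2 \<le> \<bar>u \<bullet> v\<bar>"
proof -
  obtain s where s: "\<bar>s\<bar> = 1" "norm (u - s *\<^sub>R a) \<le> e"
    using unit_near_signed_unit[OF assms(1,2,4,5)] by blast
  obtain t where t: "\<bar>t\<bar> = 1" "norm (v - t *\<^sub>R a) \<le> e"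
    using unit_near_signed_unit[OF assms(3,2,4,6)] by blast
  have st: "s * s = 1" "t * t = 1"
    using s(1) t(1) by (auto simp: abs_if split: if_splits)
  have "norm (s *\<^sub>R u - t *\<^sub>R v) = norm (s *\<^sub>R (u - s *\<^sub>R a) - t *\<^sub>R (v - t *\<^sub>R a))"
    using st by (simp add: algebra_simps)
  also have "\<dots> \<le> 2 * e"
    using norm_triangle_ineq4[of "s *\<^sub>R (u - s *\<^sub>R a)" "t *\<^sub>R (v - t *\<^sub>R a)"] s t by simp
  finally have "(norm (s *\<^sub>R u - t *\<^sub>R v))\<^sup>2 \<le> (2 * e)\<^sup>2"
    by (rule power_mono[OF _ norm_ge_zero])
  moreover have "(norm (s *\<^sub>R u - t *\<^sub>R v))\<^sup>2 = 2 - 2 * (s * t) * (u \<bullet> v)"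
    using st assms(1,3) unfolding power2_norm_eq_inner
    by (simp add: inner_diff_left inner_diff_right inner_commute norm_eq_1 algebra_simps)
  moreover have "(s * t) * (u \<bullet> v) \<le> \<bar>u \<bullet> v\<bar>"
    using s(1) t(1) by (metis abs_ge_self abs_mult mult_1 mult_1_left)
  ultimately show ?thesis
    by (simp add: power2_eq_square)
qed

definition clustered :: "real \<Rightarrow> ('n \<Rightarrow> 'a::real_inner) \<Rightarrow> 'n set \<Rightarrow> bool" where
  "clustered \<epsilon> V R \<longleftrightarrow> (\<forall>i\<in>R. \<forall>j\<in>R. \<bar>V i \<bullet> V j\<bar> \<le> \<epsilon> \<or> 1 - \<epsilon> \<le> \<bar>V i \<bullet> V j\<bar>)"

lemma not_eps_active_iff_clustered: "\<not> eps_active \<epsilon> V \<longleftrightarrow> clustered \<epsilon> V UNIV"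
  by (auto simp: eps_active_def clustered_def not_less)

lemma clustered_extend:
  fixes V :: "'n \<Rightarrow> 'a::real_inner"
  assumes "0 \<le> \<epsilon>" "\<epsilon> \<le> 1" "norm a = 1" "\<And>r. norm (V r) = 1"
    and "T \<subseteq> R" "clustered \<epsilon> V T"
    and far: "\<And>t. t \<in> T \<Longrightarrow> \<bar>V t \<bullet> a\<bar> \<le> \<epsilon> / 2"
    and near: "\<And>c. c \<in> R - T \<Longrightarrow> 1 - \<epsilon>\<^sup>2 / 32 \<le> \<bar>V c \<bullet> a\<bar>"
  shows "clustered \<epsilon> V R"
proof -
  define e where "e = \<epsilon> / 4"
  have e: "0 \<le> e" "\<epsilon>\<^sup>2 / 32 = e\<^sup>2 / 2" "2 * e\<^sup>2 \<le> \<epsilon>"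
    using assms(1) mult_left_le[OF assms(2,1)] by (auto simp: e_def power2_eq_square)
  have cross: "\<bar>V t \<bullet> V c\<bar> \<le> \<epsilon>" if "t \<in> T" "c \<in> R - T" for t c
    using abs_inner_le_near_signed_unit[OF assms(4) assms(3) assms(4) e(1), of c t] near[OF that(2)]
      far[OF that(1)] by (simp add: e(2) e_def)
  have same: "1 - \<epsilon> \<le> \<bar>V c \<bullet> V c'\<bar>" if "c \<in> R - T" "c' \<in> R - T" for c c'
    using abs_inner_ge_near_common_unit[OF assms(4) assms(3) assms(4) e(1), of c c']
      near[OF that(1)] near[OF that(2)] e(2,3) by linarith
  show ?thesis
    unfolding clustered_def
  proof (intro ballI)
    fix i j assume "i \<in> R" "j \<in> R"
    then consider "i \<in> T" "j \<in> T" | "i \<in> T" "j \<in> R - T" | "i \<in> R - T" "j \<in> T"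
      | "i \<in> R - T" "j \<in> R - T" by blast
    then show "\<bar>V i \<bullet> V j\<bar> \<le> \<epsilon> \<or> 1 - \<epsilon> \<le> \<bar>V i \<bullet> V j\<bar>"
      using assms(6) cross cross[of j i] same unfolding clustered_def
      by cases (auto simp: inner_commute)
  qed
qed

definition attract :: "(real \<Rightarrow> real) \<Rightarrow> 'a::real_inner \<Rightarrow> 'a \<Rightarrow> 'a" where
  "attract f u v = (let w = u + f (u \<bullet> v) *\<^sub>R v in (1 / norm w) *\<^sub>R w)"

lemma intervene_Pair: "intervene f (i, j) U = U(i := attract f (U i) (U j))"
  by (simp add: intervene_def attract_def Let_def)

lemma apply_interventions_Nil [simp]: "apply_interventions f [] U = U"
  by (simp add: apply_interventions_def)

lemma apply_interventions_Cons [simp]: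
  "apply_interventions f (p # ps) U = apply_interventions f ps (intervene f p U)"
  by (simp add: apply_interventions_def)

lemma apply_interventions_append:
  "apply_interventions f (ps @ qs) U = apply_interventions f qs (apply_interventions f ps U)"
  by (simp add: apply_interventions_def)

lemma apply_interventions_outside:
  assumes "\<forall>(i, j) \<in> set ps. i \<in> S" "r \<notin> S"
  shows "apply_interventions f ps U r = U r"
  using assms by (induction ps arbitrary: U) (auto simp: intervene_def Let_def)

lemma apply_interventions_replicate:
  assumes "j \<noteq> b"
  shows "apply_interventions f (replicate N (j, b)) U
           = U(j := ((\<lambda>y. attract f y (U b)) ^^ N) (U j))"
  using assms
  by (induction N arbitrary: U) (simp_all add: intervene_Pair funpow_Suc_right del: funpow.simps)

lemma apply_interventions_concat_replicate:
  assumes "distinct xs" "b \<notin> set xs"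
  shows "apply_interventions f (concat (map (\<lambda>j. replicate N (j, b)) xs)) U
       = (\<lambda>r. if r \<in> set xs then ((\<lambda>y. attract f y (U b)) ^^ N) (U r) else U r)"
  using assms
  by (induction xs arbitrary: U)
    (auto simp: apply_interventions_append apply_interventions_replicate fun_eq_iff)

definition clusterable_within ::
  "(real \<Rightarrow> real) \<Rightarrow> real \<Rightarrow> nat \<Rightarrow> ('n \<Rightarrow> real ^ 'd::finite) \<Rightarrow> 'n set \<Rightarrow> bool" where
  "clusterable_within f \<epsilon> L U R \<longleftrightarrow>
     (\<exists>ps. length ps \<le> L \<and> (\<forall>(i, j) \<in> set ps. i \<noteq> j \<and> i \<in> R \<and> j \<in> R) \<and>
           clustered \<epsilon> (apply_interventions f ps U) R)"

section \<open>Attraction towards a fixed opinion\<close>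

lemma stepwise_gain_bound:
  fixes x :: "nat \<Rightarrow> real"
  assumes "\<And>n. x n \<le> x (Suc n)" "\<And>n. x n < a \<Longrightarrow> x n + c \<le> x (Suc n)"
  shows "min a (x 0 + real n * c) \<le> x n"
proof (induction n)
  case (Suc n)
  show ?case
  proof (cases "x n < a")
    case True
    then show ?thesis using Suc assms(2)[of n] by (simp add: algebra_simps min_def split: if_splits)
  qed (use assms(1)[of n] in auto)
qed simp

context
  fixes f :: "real \<Rightarrow> real"
  assumes stable: "stable f"
begin

lemma stable_mult_self_nonneg: "\<bar>A\<bar> \<le> 1 \<Longrightarrow> 0 \<le> A * f A"
proof -
  assume "\<bar>A\<bar> \<le> 1"
  then have "sgn (f A) = sgn A"
    using stable by (auto simp: stable_def abs_le_iff)
  then have "sgn (A * f A) = sgn A * sgn A"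
    by (simp add: sgn_mult)
  then show ?thesis
    by (metis zero_le_square zero_le_sgn_iff)
qed

lemma stable_bounded: "\<exists>M\<ge>0. \<forall>A. \<bar>A\<bar> \<le> 1 \<longrightarrow> \<bar>f A\<bar> \<le> M"
proof -
  have "continuous_on {-1..1} (\<lambda>A. \<bar>f A\<bar>)"
    using stable by (auto simp: stable_def intro: continuous_intros)
  from continuous_attains_sup[OF compact_Icc _ this]
  obtain x where "\<forall>y\<in>{-1..1}. \<bar>f y\<bar> \<le> \<bar>f x\<bar>"
    by auto
  then show ?thesis
    by (intro exI[of _ "\<bar>f x\<bar>"]) (auto simp: abs_le_iff)
qed

lemma stable_mult_self_pos_bound:
  assumes "0 < \<eta>" "\<eta> \<le> 1"
  shows "\<exists>m>0. \<forall>A. \<eta> \<le> \<bar>A\<bar> \<longrightarrow> \<bar>A\<bar> \<le> 1 \<longrightarrow> m \<le> A * f A"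
proof -
  define K where "K = {-1..-\<eta>} \<union> {\<eta>..1::real}"
  have K: "K = {A. \<eta> \<le> \<bar>A\<bar> \<and> \<bar>A\<bar> \<le> 1}"
    using assms by (auto simp: K_def)
  have "K \<subseteq> {-1..1}"
    using assms by (auto simp: K_def abs_le_iff)
  then have "continuous_on K f"
    using stable continuous_on_subset unfolding stable_def by blast
  then have "continuous_on K (\<lambda>A. A * f A)"
    by (intro continuous_intros)
  moreover have "compact K" "K \<noteq> {}"
    using assms by (auto simp: K_def)
  ultimately obtain x where x: "x \<in> K" "\<forall>y\<in>K. x * f x \<le> y * f y"
    using continuous_attains_inf by blast
  have "sgn (f x) = sgn x" "x \<noteq> 0"
    using stable x(1) assms unfolding stable_def K by (auto simp: abs_le_iff)
  then have "0 < x * f x"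
    by (auto simp: sgn_if zero_less_mult_iff split: if_splits)
  then show ?thesis
    using x K by blast
qed


lemma norm_attract_vector_ge_1:
  fixes u v :: "'a::real_inner"
  assumes "norm u = 1" "norm v = 1"
  shows "1 \<le> norm (u + f (u \<bullet> v) *\<^sub>R v)"
proof -
  have "0 \<le> (u \<bullet> v) * f (u \<bullet> v)"
    using stable_mult_self_nonneg abs_inner_unit_le_1[OF assms] by blast
  then have "1\<^sup>2 \<le> (norm (u + f (u \<bullet> v) *\<^sub>R v))\<^sup>2"
    using norm_add_scaleR_unit_sq[OF assms, of "f (u \<bullet> v)"] by simp
  then show ?thesis
    by (rule power2_le_imp_le) simp
qed

lemma norm_attract:
  fixes u v :: "'a::real_inner"
  assumes "norm u = 1" "norm v = 1"
  shows "norm (attract f u v) = 1"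
  using norm_attract_vector_ge_1[OF assms] by (auto simp: attract_def Let_def)

lemma abs_inner_attract_le:
  fixes u v x :: "'a::real_inner"
  assumes "norm u = 1" "norm v = 1"
  shows "\<bar>attract f u v \<bullet> x\<bar> \<le> \<bar>u \<bullet> x\<bar> + \<bar>f (u \<bullet> v)\<bar> * \<bar>v \<bullet> x\<bar>"
proof -
  define w where "w = u + f (u \<bullet> v) *\<^sub>R v"
  have "\<bar>attract f u v \<bullet> x\<bar> = \<bar>w \<bullet> x\<bar> / norm w"
    by (simp add: attract_def Let_def w_def[symmetric] abs_mult)
  also have "\<dots> \<le> \<bar>w \<bullet> x\<bar>"
    using norm_attract_vector_ge_1[OF assms] by (simp add: w_def divide_le_eq mult_le_cancel_left1)
  also have "\<dots> \<le> \<bar>u \<bullet> x\<bar> + \<bar>f (u \<bullet> v)\<bar> * \<bar>v \<bullet> x\<bar>"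
    by (simp add: w_def inner_add_left abs_mult[symmetric] abs_triangle_ineq)
  finally show ?thesis .
qed

lemma attract_inner_sq:
  fixes u v :: "'a::real_inner"
  assumes "norm u = 1" "norm v = 1"
  defines "A \<equiv> u \<bullet> v"
  shows "(attract f u v \<bullet> v)\<^sup>2
    = A\<^sup>2 + (1 - A\<^sup>2) * (2 * A * f A + (f A)\<^sup>2) / (1 + 2 * A * f A + (f A)\<^sup>2)"
proof -
  define w where "w = u + f A *\<^sub>R v"
  have D: "(norm w)\<^sup>2 = 1 + 2 * A * f A + (f A)\<^sup>2"
    using norm_add_scaleR_unit_sq[OF assms(1,2)] by (simp add: w_def A_def)
  have D1: "1 \<le> 1 + 2 * A * f A + (f A)\<^sup>2"
    using stable_mult_self_nonneg[of A] abs_inner_unit_le_1[OF assms(1,2)] by (simp add: A_def)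
  have "w \<bullet> v = A + f A"
    using assms(2) by (simp add: w_def inner_add_left A_def norm_eq_1)
  then have "(attract f u v \<bullet> v)\<^sup>2 = (A + f A)\<^sup>2 / (1 + 2 * A * f A + (f A)\<^sup>2)"
    using D by (simp add: attract_def Let_def w_def A_def power_divide)
  also have "\<dots> = A\<^sup>2 + (1 - A\<^sup>2) * (2 * A * f A + (f A)\<^sup>2) / (1 + 2 * A * f A + (f A)\<^sup>2)"
    using D1 by (simp add: field_simps power2_eq_square)
  finally show ?thesis .
qed

lemma attract_inner_sq_mono:
  fixes u v :: "'a::real_inner"
  assumes "norm u = 1" "norm v = 1"
  shows "(u \<bullet> v)\<^sup>2 \<le> (attract f u v \<bullet> v)\<^sup>2"
proof -
  define A where "A = u \<bullet> v"
  have "\<bar>A\<bar> \<le> 1"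
    using abs_inner_unit_le_1[OF assms] by (simp add: A_def)
  then have "0 \<le> (1 - A\<^sup>2) * (2 * A * f A + (f A)\<^sup>2) / (1 + 2 * A * f A + (f A)\<^sup>2)"
    using stable_mult_self_nonneg[of A] by (simp add: abs_square_le_1)
  then show ?thesis
    using attract_inner_sq[OF assms] by (simp add: A_def)
qed


lemma attract_inner_sq_gain:
  assumes "0 < \<delta>" "0 < \<eta>" "\<eta> \<le> 1"
  shows "\<exists>c>0. \<forall>u v :: 'a::real_inner. norm u = 1 \<longrightarrow> norm v = 1 \<longrightarrow>
           \<eta> \<le> \<bar>u \<bullet> v\<bar> \<longrightarrow> (u \<bullet> v)\<^sup>2 \<le> 1 - \<delta> \<longrightarrow> (u \<bullet> v)\<^sup>2 + c \<le> (attract f u v \<bullet> v)\<^sup>2"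
proof -
  obtain m where m: "0 < m" "\<And>A. \<eta> \<le> \<bar>A\<bar> \<Longrightarrow> \<bar>A\<bar> \<le> 1 \<Longrightarrow> m \<le> A * f A"
    using stable_mult_self_pos_bound[OF assms(2,3)] by blast
  obtain M where M: "0 \<le> M" "\<And>A. \<bar>A\<bar> \<le> 1 \<Longrightarrow> \<bar>f A\<bar> \<le> M"
    using stable_bounded by blast
  define c where "c = \<delta> * (2 * m) / (1 + M)\<^sup>2"
  have "(u \<bullet> v)\<^sup>2 + c \<le> (attract f u v \<bullet> v)\<^sup>2"
    if u: "norm u = 1" "norm v = 1" "\<eta> \<le> \<bar>u \<bullet> v\<bar>" "(u \<bullet> v)\<^sup>2 \<le> 1 - \<delta>" for u v :: 'a
  proof -
    define A where "A = u \<bullet> v"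
    have A: "\<bar>A\<bar> \<le> 1"
      using abs_inner_unit_le_1[OF u(1,2)] by (simp add: A_def)
    have AF: "m \<le> A * f A"
      using m(2) u(3) A by (simp add: A_def)
    have FM: "\<bar>f A\<bar> \<le> M"
      using M(2)[OF A] .
    have "A * f A \<le> \<bar>A\<bar> * \<bar>f A\<bar>"
      by (metis abs_ge_self abs_mult)
    also have "\<dots> \<le> 1 * M"
      using A FM M(1) by (intro mult_mono) auto
    finally have "A * f A \<le> M"
      by simp
    moreover have "(f A)\<^sup>2 \<le> M\<^sup>2"
      using FM M(1) by (simp add: abs_le_square_iff[symmetric])
    ultimately have denom: "1 + 2 * A * f A + (f A)\<^sup>2 \<le> (1 + M)\<^sup>2"
      by (simp add: power2_eq_square algebra_simps)
    have \<delta>A: "\<delta> \<le> 1 - A\<^sup>2" and mAF: "2 * m \<le> 2 * A * f A + (f A)\<^sup>2"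
      using u(4) AF by (simp_all add: A_def add_increasing2)
    have numer: "\<delta> * (2 * m) \<le> (1 - A\<^sup>2) * (2 * A * f A + (f A)\<^sup>2)"
      by (rule mult_mono[OF \<delta>A mAF]) (use \<delta>A assms(1) m(1) in linarith)+
    have "0 < \<delta> * (2 * m)" "0 < 1 + 2 * A * f A + (f A)\<^sup>2"
      using assms(1) m(1) AF zero_le_power2[of "f A"] by (simp, linarith)
    then have "c \<le> (1 - A\<^sup>2) * (2 * A * f A + (f A)\<^sup>2) / (1 + 2 * A * f A + (f A)\<^sup>2)"
      unfolding c_def using numer denom by (intro frac_le) auto
    then show ?thesis
      using attract_inner_sq[OF u(1,2)] by (simp add: A_def)
  qed
  moreover have "0 < c"
    using assms m M by (simp add: c_def)
  ultimately show ?thesis by blast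
qed

lemma attract_iterate_aligns:
  assumes "0 < \<delta>" "0 < \<eta>" "\<eta> \<le> 1"
  shows "\<exists>N. \<forall>u v :: 'a::real_inner. norm u = 1 \<longrightarrow> norm v = 1 \<longrightarrow> \<eta> \<le> \<bar>u \<bullet> v\<bar> \<longrightarrow>
           1 - \<delta> \<le> \<bar>((\<lambda>y. attract f y v) ^^ N) u \<bullet> v\<bar>"
proof -
  obtain c where c: "0 < c" "\<And>u v :: 'a. norm u = 1 \<Longrightarrow> norm v = 1 \<Longrightarrow> \<eta> \<le> \<bar>u \<bullet> v\<bar> \<Longrightarrow>
      (u \<bullet> v)\<^sup>2 \<le> 1 - \<delta> \<Longrightarrow> (u \<bullet> v)\<^sup>2 + c \<le> (attract f u v \<bullet> v)\<^sup>2"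
    using attract_inner_sq_gain[OF assms] by blast
  obtain N :: nat where "1 / c \<le> N"
    using real_arch_simple by blast
  then have N: "1 \<le> N * c"
    using c(1) by (simp add: field_simps)
  have "1 - \<delta> \<le> \<bar>((\<lambda>y. attract f y v) ^^ N) u \<bullet> v\<bar>"
    if u: "norm u = 1" "norm v = 1" "\<eta> \<le> \<bar>u \<bullet> v\<bar>" for u v :: 'a
  proof -
    define y where "y n = ((\<lambda>y. attract f y v) ^^ n) u" for n
    define x where "x n = (y n \<bullet> v)\<^sup>2" for n
    have y: "norm (y n) = 1" "y (Suc n) = attract f (y n) v" for n
      by (induction n) (auto simp: y_def u norm_attract)
    have mono: "x n \<le> x (Suc n)" for n
      using attract_inner_sq_mono[OF y(1) u(2)] by (simp add: x_def y(2))
    have gain: "x n + c \<le> x (Suc n)" if "x n < 1 - \<delta>" for n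
    proof -
      have "(u \<bullet> v)\<^sup>2 \<le> x n"
        using lift_Suc_mono_le[of x, OF mono, of 0 n] by (simp add: x_def y_def)
      then have "\<bar>u \<bullet> v\<bar> \<le> \<bar>y n \<bullet> v\<bar>"
        by (simp add: x_def abs_le_square_iff)
      then have "\<eta> \<le> \<bar>y n \<bullet> v\<bar>"
        using u(3) by linarith
      then show ?thesis
        using c(2)[OF y(1) u(2)] that by (simp add: x_def y(2))
    qed
    have "1 - \<delta> \<le> x 0 + N * c"
      using N assms(1) by (simp add: x_def add_increasing)
    then have "1 - \<delta> \<le> x N"
      using stepwise_gain_bound[of x "1 - \<delta>" c N, OF mono gain] by linarith
    also have "x N = \<bar>y N \<bullet> v\<bar> * \<bar>y N \<bullet> v\<bar>"
      by (simp add: x_def power2_eq_square)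
    also have "\<dots> \<le> \<bar>y N \<bullet> v\<bar>"
      by (rule mult_left_le[OF abs_inner_unit_le_1[OF y(1) u(2)] abs_ge_zero])
    finally show ?thesis
      by (simp add: y_def)
  qed
  then show ?thesis by blast
qed

section \<open>Clustering by induction on the number of agents\<close>

lemma is_config_apply_interventions:
  fixes U :: "'n \<Rightarrow> real ^ 'd::finite"
  shows "is_config U \<Longrightarrow> is_config (apply_interventions f ps U)"
proof (induction ps arbitrary: U)
  case (Cons p ps)
  then have "is_config (intervene f p U)"
    by (cases p) (simp add: is_config_def intervene_Pair norm_attract)
  then show ?case
    using Cons.IH by simp
qed simp

lemma abs_inner_apply_interventions_le:
  fixes U :: "'n \<Rightarrow> real ^ 'd::finite"
  assumes M: "0 \<le> M" "\<And>A. \<bar>A\<bar> \<le> 1 \<Longrightarrow> \<bar>f A\<bar> \<le> M"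
    and "is_config U" "\<forall>(i, j) \<in> set ps. i \<in> R \<and> j \<in> R" "\<forall>r\<in>R. \<bar>U r \<bullet> x\<bar> \<le> \<tau>"
  shows "\<forall>r\<in>R. \<bar>apply_interventions f ps U r \<bullet> x\<bar> \<le> \<tau> * (1 + M) ^ length ps"
  using assms(3-5)
proof (induction ps arbitrary: U \<tau>)
  case (Cons p ps)
  obtain i j where p: "p = (i, j)" and ij: "i \<in> R" "j \<in> R"
    using Cons.prems(2) by (cases p) auto
  have unit: "norm (U i) = 1" "norm (U j) = 1"
    using Cons.prems(1) by (auto simp: is_config_def)
  have "\<tau> * 1 \<le> \<tau> * (1 + M)"
    using Cons.prems(3) ij M(1) by (intro mult_left_mono) auto
  moreover have "\<bar>attract f (U i) (U j) \<bullet> x\<bar> \<le> \<tau> + M * \<tau>"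
    using abs_inner_attract_le[OF unit, of x] Cons.prems(3) ij M(2) abs_inner_unit_le_1[OF unit]
    by (smt (verit, best) abs_ge_zero mult_mono)
  ultimately have "\<forall>r\<in>R. \<bar>intervene f p U r \<bullet> x\<bar> \<le> \<tau> * (1 + M)"
    using Cons.prems(3) by (auto simp: p intervene_Pair algebra_simps)
  moreover have "is_config (intervene f p U)"
    using is_config_apply_interventions[OF Cons.prems(1), of "[p]"] by simp
  ultimately show ?case
    using Cons.IH[of "intervene f p U" "\<tau> * (1 + M)"] Cons.prems(2) by (simp add: mult.assoc)
qed simp

lemma attraction_phase:
  fixes U :: "'n::finite \<Rightarrow> real ^ 'd::finite"
  assumes N: "\<And>u v :: real ^ 'd. norm u = 1 \<Longrightarrow> norm v = 1 \<Longrightarrow> \<eta> \<le> \<bar>u \<bullet> v\<bar> \<Longrightarrow>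
                1 - \<delta> \<le> \<bar>((\<lambda>y. attract f y v) ^^ N) u \<bullet> v\<bar>"
    and "is_config U" "b \<in> R" "0 \<le> \<delta>"
  shows "\<exists>ps. length ps \<le> N * card R \<and>
           (\<forall>(i, j) \<in> set ps. i \<noteq> j \<and> i \<in> R \<and> \<eta> \<le> \<bar>U i \<bullet> U b\<bar> \<and> j \<in> R) \<and>
           (\<forall>c \<in> R. \<eta> \<le> \<bar>U c \<bullet> U b\<bar> \<longrightarrow> 1 - \<delta> \<le> \<bar>apply_interventions f ps U c \<bullet> U b\<bar>)"
proof -
  define S where "S = {r \<in> R. r \<noteq> b \<and> \<eta> \<le> \<bar>U r \<bullet> U b\<bar>}"
  have unit: "\<And>r. norm (U r) = 1"
    using assms(2) by (simp add: is_config_def)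
  obtain xs where xs: "set xs = S" "distinct xs"
    using finite_distinct_list[of S] by auto
  define ps where "ps = concat (map (\<lambda>j. replicate N (j, b)) xs)"
  have V: "apply_interventions f ps U
      = (\<lambda>r. if r \<in> S then ((\<lambda>y. attract f y (U b)) ^^ N) (U r) else U r)"
    unfolding ps_def using xs by (subst apply_interventions_concat_replicate) (auto simp: S_def)
  have "length ps = N * length xs"
    unfolding ps_def by (induction xs) auto
  also have "\<dots> \<le> N * card R"
    using xs by (simp add: distinct_card[symmetric] S_def card_mono)
  finally have "length ps \<le> N * card R" .
  moreover have "\<forall>(i, j) \<in> set ps. i \<noteq> j \<and> i \<in> R \<and> \<eta> \<le> \<bar>U i \<bullet> U b\<bar> \<and> j \<in> R"
    using xs assms(3) by (auto simp: ps_def S_def)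
  moreover have "1 - \<delta> \<le> \<bar>apply_interventions f ps U c \<bullet> U b\<bar>" if "c \<in> R" "\<eta> \<le> \<bar>U c \<bullet> U b\<bar>" for c
  proof (cases "c = b")
    case True
    then show ?thesis
      using unit[of b] assms(4) by (simp add: V S_def norm_eq_1)
  next
    case False
    then show ?thesis
      using that N[OF unit unit, of c b] by (simp add: V S_def)
  qed
  ultimately show ?thesis by blast
qed

lemma clusterable_within_Suc_card:
  fixes U :: "'n::finite \<Rightarrow> real ^ 'd::finite"
  assumes \<epsilon>: "0 < \<epsilon>" "\<epsilon> \<le> 1"
    and M: "0 \<le> M" "\<And>A. \<bar>A\<bar> \<le> 1 \<Longrightarrow> \<bar>f A\<bar> \<le> M"
    and \<eta>: "0 \<le> \<eta>" "\<eta> \<le> 1" "\<eta> * (1 + M) ^ L \<le> \<epsilon> / 2"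
    and N: "\<And>u v :: real ^ 'd. norm u = 1 \<Longrightarrow> norm v = 1 \<Longrightarrow> \<eta> \<le> \<bar>u \<bullet> v\<bar> \<Longrightarrow>
              1 - \<epsilon>\<^sup>2 / 32 \<le> \<bar>((\<lambda>y. attract f y v) ^^ N) u \<bullet> v\<bar>"
    and IH: "\<And>R (U :: 'n \<Rightarrow> real ^ 'd). card R \<le> k \<Longrightarrow> is_config U \<Longrightarrow> clusterable_within f \<epsilon> L U R"
    and R: "card R \<le> Suc k" and U: "is_config U"
  shows "clusterable_within f \<epsilon> (N * Suc k + L) U R"
proof (cases "R = {}")
  case True
  then show ?thesis
    by (auto simp: clusterable_within_def clustered_def intro: exI[of _ "[]"])
next
  case False
  then obtain b where b: "b \<in> R" by blast
  have unit: "\<And>r. norm (U r) = 1"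
    using U by (simp add: is_config_def)
  define T where "T = {r \<in> R. \<bar>U r \<bullet> U b\<bar> < \<eta>}"
  obtain ps1 where ps1: "length ps1 \<le> N * card R" "\<forall>(i, j) \<in> set ps1. i \<noteq> j \<and> i \<in> R - T \<and> j \<in> R"
    and near: "\<forall>c \<in> R - T. 1 - \<epsilon>\<^sup>2 / 32 \<le> \<bar>apply_interventions f ps1 U c \<bullet> U b\<bar>"
    using attraction_phase[OF N U b] by (fastforce simp: T_def not_less)
  define V where "V = apply_interventions f ps1 U"
  have VT: "V t = U t" if "t \<in> T" for t
    unfolding V_def using ps1(2) that by (intro apply_interventions_outside[where S = "R - T"]) fastforce+
  have T: "T \<subseteq> R - {b}"
    using unit[of b] \<eta>(2) by (auto simp: T_def norm_eq_1)
  then have "card T \<le> k"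
    using R b card_mono[of "R - {b}" T] by simp
  moreover have V: "is_config V"
    unfolding V_def by (rule is_config_apply_interventions[OF U])
  ultimately obtain ps2 where ps2: "length ps2 \<le> L" "\<forall>(i, j) \<in> set ps2. i \<noteq> j \<and> i \<in> T \<and> j \<in> T"
    and clT: "clustered \<epsilon> (apply_interventions f ps2 V) T"
    using IH unfolding clusterable_within_def by blast
  define W where "W = apply_interventions f ps2 V"
  have drift: "\<forall>t\<in>T. \<bar>W t \<bullet> U b\<bar> \<le> \<eta> * (1 + M) ^ length ps2"
    unfolding W_def
    by (rule abs_inner_apply_interventions_le[OF M V]) (use ps2(2) VT in \<open>auto simp: T_def\<close>)
  have far: "\<bar>W t \<bullet> U b\<bar> \<le> \<epsilon> / 2" if "t \<in> T" for t
  proof -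
    have "\<bar>W t \<bullet> U b\<bar> \<le> \<eta> * (1 + M) ^ length ps2"
      using drift that by blast
    also have "\<dots> \<le> \<eta> * (1 + M) ^ L"
      using \<eta>(1) M(1) ps2(1) by (intro mult_left_mono power_increasing) auto
    finally show ?thesis
      using \<eta>(3) by simp
  qed
  have "W c = V c" if "c \<notin> T" for c
    unfolding W_def using ps2(2) that by (intro apply_interventions_outside) auto
  then have nearW: "1 - \<epsilon>\<^sup>2 / 32 \<le> \<bar>W c \<bullet> U b\<bar>" if "c \<in> R - T" for c
    using near that by (simp add: V_def)
  have "\<And>r. norm (W r) = 1"
    using is_config_apply_interventions[OF V] by (simp add: W_def is_config_def)
  then have "clustered \<epsilon> W R"
    using \<epsilon> clT T
    by (intro clustered_extend[OF _ _ unit, of \<epsilon> W T R, OF _ _ _ _ _ far nearW]) (auto simp: W_def)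
  moreover have "length ps1 \<le> N * Suc k"
    using ps1(1) R mult_le_mono2 order_trans by blast
  ultimately show ?thesis
    unfolding clusterable_within_def W_def V_def
    using ps1(2) ps2 T
    by (intro exI[of _ "ps1 @ ps2"]) (auto simp: apply_interventions_append)
qed

lemma clusterable_within_Suc:
  assumes \<epsilon>: "0 < \<epsilon>" "\<epsilon> \<le> 1"
    and IH: "\<And>R (U :: 'n \<Rightarrow> real ^ 'd). card R \<le> k \<Longrightarrow> is_config U \<Longrightarrow> clusterable_within f \<epsilon> L U R"
  shows "\<exists>L'. \<forall>R (U :: 'n::finite \<Rightarrow> real ^ 'd::finite). card R \<le> Suc k \<longrightarrow> is_config U \<longrightarrow>
           clusterable_within f \<epsilon> L' U R"
proof -
  obtain M where M: "0 \<le> M" "\<And>A. \<bar>A\<bar> \<le> 1 \<Longrightarrow> \<bar>f A\<bar> \<le> M"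
    using stable_bounded by blast
  \<comment> \<open>Each of the at most L interventions spent on the agents far from the anchor multiplies
    their inner products with it by at most 1 + M, so starting below \<eta> they stay below \<epsilon>/2.\<close>
  define \<eta> where "\<eta> = \<epsilon> / (2 * (1 + M) ^ L)"
  have "1 \<le> (1 + M) ^ L"
    using M(1) by simp
  then have "\<epsilon> \<le> 2 * (1 + M) ^ L"
    using \<epsilon> by linarith
  then have \<eta>: "0 < \<eta>" "\<eta> \<le> 1" "\<eta> * (1 + M) ^ L = \<epsilon> / 2"
    using \<epsilon> M(1) by (auto simp: \<eta>_def divide_le_eq)
  obtain N where "\<And>u v :: real ^ 'd. norm u = 1 \<Longrightarrow> norm v = 1 \<Longrightarrow> \<eta> \<le> \<bar>u \<bullet> v\<bar> \<Longrightarrow>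
      1 - \<epsilon>\<^sup>2 / 32 \<le> \<bar>((\<lambda>y. attract f y v) ^^ N) u \<bullet> v\<bar>"
    using attract_iterate_aligns[of "\<epsilon>\<^sup>2 / 32" \<eta>] \<eta>(1,2) \<epsilon>(1) by auto
  then show ?thesis
    using clusterable_within_Suc_card[OF \<epsilon> M less_imp_le[OF \<eta>(1)] \<eta>(2) eq_refl[OF \<eta>(3)] _ IH]
    by blast
qed

lemma clusterable_within_bound:
  assumes "0 < \<epsilon>" "\<epsilon> \<le> 1"
  shows "\<exists>L. \<forall>R (U :: 'n::finite \<Rightarrow> real ^ 'd::finite). card R \<le> k \<longrightarrow> is_config U \<longrightarrow>
           clusterable_within f \<epsilon> L U R"
proof (induction k)
  case 0
  show ?case
    by (intro exI[of _ 0]) (auto simp: clusterable_within_def clustered_def)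
next
  case (Suc k)
  then show ?case
    using clusterable_within_Suc[OF assms] by blast
qed

end

theorem mainTheorem9:
  fixes f :: "real \<Rightarrow> real" and \<epsilon> :: real
  assumes "CARD('d::finite) \<ge> 2" and "CARD('n::finite) \<ge> 2"
    and "0 < \<epsilon>" and "\<epsilon> < 1/4"
    and "stable f"
  shows "\<exists>K::nat. K > 0 \<and>
           (\<forall>U :: 'n \<Rightarrow> real ^ 'd. is_config U \<and> eps_active \<epsilon> U \<longrightarrow>
              (\<exists>ps. length ps \<le> K \<and> (\<forall>(i, j) \<in> set ps. i \<noteq> j) \<and>
                    \<not> eps_active \<epsilon> (apply_interventions f ps U)))"
proof -
  obtain L where L: "\<And>R (U :: 'n \<Rightarrow> real ^ 'd). card R \<le> CARD('n) \<Longrightarrow> is_config U \<Longrightarrow>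
      clusterable_within f \<epsilon> L U R"
    using clusterable_within_bound[OF assms(5,3), of "CARD('n)"] assms(4) by fastforce
  have "\<exists>ps. length ps \<le> Suc L \<and> (\<forall>(i, j) \<in> set ps. i \<noteq> j) \<and>
          \<not> eps_active \<epsilon> (apply_interventions f ps U)" if U: "is_config U" for U :: "'n \<Rightarrow> real ^ 'd"
  proof -
    obtain ps where "length ps \<le> L" "\<forall>(i, j) \<in> set ps. i \<noteq> j"
      "clustered \<epsilon> (apply_interventions f ps U) UNIV"
      using L[of UNIV, OF order_refl U] by (auto simp: clusterable_within_def)
    then show ?thesis
      by (intro exI[of _ ps]) (simp add: not_eps_active_iff_clustered)
  qed
  then show ?thesis
    by (intro exI[of _ "Suc L"]) auto
qed

end
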